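(* Let $\Omega_1,\dots,\Omega_K$ be linear subspaces of $\mathbb{R}^n$ whose sum is $\mathbb{R}^n$. For each $k=1,\dots,K$ let $W_k$ be a matrix with rows $w_{k,1},\dots,w_{k,N_k}$, all lying in $\Omega_k$, such that $W_k$ has a directed spanning set of $\Omega_k$ with respect to every $x \in \Omega_k$. Let $W$ be the matrix obtained by stacking the rows of $W_1,\dots,W_K$. Then $W$ has a directed spanning set of $\mathbb{R}^n$ with respect to every $x \in \mathbb{R}^n$.
   Context: A matrix $W$ with rows $w_i \in \mathbb{R}^n$ has a directed spanning set (DSS) of a subspace $\Omega\subset\mathbb{R}^n$ with respect to $x \in \mathbb{R}^n$ if there is a collection of rows $w_i$ of $W$ with $\langle x, w_i\rangle \geq 0$ for each of them and whose span contains $\Omega$. *)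

theory Defs
  imports "HOL-Analysis.Analysis"
begin

text \<open>A matrix is represented by the list of its rows.\<close>

definition has_dss :: "('a::real_inner) list \<Rightarrow> 'a set \<Rightarrow> 'a \<Rightarrow> bool" where
  "has_dss W \<Omega> x \<longleftrightarrow> (\<exists>S. S \<subseteq> set W \<and> (\<forall>w\<in>S. inner x w \<ge> 0) \<and> \<Omega> \<subseteq> span S)"

end

theory Submission
  imports Defs
begin

text \<open>Only the component of x along \<open>\<Omega>\<^sub>k\<close> matters for the signs of the inner products with
rows lying in \<open>\<Omega>\<^sub>k\<close>, so each \<open>W\<^sub>k\<close> has a DSS of \<open>\<Omega>\<^sub>k\<close> with respect to every x in the whole
space. Taking the union of these directed spanning sets gives a set of rows of the stacked
matrix, all with nonnegative inner product with x, whose span contains every \<open>\<Omega>\<^sub>k\<close> and hence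
their sum, which is the whole space.\<close>

lemma has_dss_mono: "has_dss W A x \<Longrightarrow> B \<subseteq> A \<Longrightarrow> has_dss W B x"
  unfolding has_dss_def by blast

lemma has_dss_add_orthogonal:
  assumes "\<And>w. w \<in> set W \<Longrightarrow> inner z w = 0"
  shows "has_dss W \<Omega> (y + z) \<longleftrightarrow> has_dss W \<Omega> y"
proof -
  have "inner (y + z) w = inner y w" if "w \<in> set W" for w
    using assms that by (simp add: inner_add_left)
  then show ?thesis
    unfolding has_dss_def by (metis subsetD)
qed

lemma has_dss_of_subspace:
  fixes \<Omega> :: "'a::euclidean_space set"
  assumes "subspace \<Omega>" and "set W \<subseteq> \<Omega>" and "\<And>y. y \<in> \<Omega> \<Longrightarrow> has_dss W \<Omega> y"
  shows "has_dss W \<Omega> x"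
proof -
  obtain y z where y: "y \<in> span \<Omega>" and z: "\<And>w. w \<in> span \<Omega> \<Longrightarrow> orthogonal z w"
    and x: "x = y + z"
    using orthogonal_subspace_decomp_exists by blast
  have "inner z w = 0" if "w \<in> set W" for w
    using z[of w] that assms(2) by (auto simp: orthogonal_def intro: span_base)
  moreover have "has_dss W \<Omega> y"
    using y assms(1,3) by (metis span_eq_iff)
  ultimately show ?thesis
    unfolding x by (simp add: has_dss_add_orthogonal)
qed

lemma has_dss_concat:
  assumes "\<And>k. k < K \<Longrightarrow> has_dss (W k) (\<Omega> k) x"
  shows "has_dss (concat (map W [0..<K])) (span (\<Union>k<K. \<Omega> k)) x"
proof -
  obtain S where S: "\<And>k. k < K \<Longrightarrow>
      S k \<subseteq> set (W k) \<and> (\<forall>w\<in>S k. inner x w \<ge> 0) \<and> \<Omega> k \<subseteq> span (S k)"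
    using assms unfolding has_dss_def by metis
  have "(\<Union>k<K. S k) \<subseteq> set (concat (map W [0..<K]))"
    using S by fastforce
  moreover have "\<forall>w\<in>(\<Union>k<K. S k). inner x w \<ge> 0"
    using S by blast
  moreover have "(\<Union>k<K. \<Omega> k) \<subseteq> span (\<Union>k<K. S k)"
    using S by (fastforce intro: subsetD[OF span_mono])
  then have "span (\<Union>k<K. \<Omega> k) \<subseteq> span (\<Union>k<K. S k)"
    by (simp add: span_minimal)
  ultimately show ?thesis
    unfolding has_dss_def by blast
qed

theorem lemma2:
  fixes K :: nat
    and \<Omega> :: "nat \<Rightarrow> (real^'n) set"
    and W :: "nat \<Rightarrow> (real^'n) list"
  assumes subsp: "\<And>k. k < K \<Longrightarrow> subspace (\<Omega> k)"
    and sum_all: "{(\<Sum>k<K. v k) | v. \<forall>k<K. v k \<in> \<Omega> k} = UNIV"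
    and rows_in: "\<And>k. k < K \<Longrightarrow> set (W k) \<subseteq> \<Omega> k"
    and dss_k: "\<And>k x. k < K \<Longrightarrow> x \<in> \<Omega> k \<Longrightarrow> has_dss (W k) (\<Omega> k) x"
  shows "\<forall>x::real^'n. has_dss (concat (map W [0..<K])) UNIV x"
proof
  fix x :: "real^'n"
  have "has_dss (W k) (\<Omega> k) x" if "k < K" for k
    using has_dss_of_subspace subsp rows_in dss_k that by blast
  then have "has_dss (concat (map W [0..<K])) (span (\<Union>k<K. \<Omega> k)) x"
    by (rule has_dss_concat)
  moreover have "UNIV \<subseteq> span (\<Union>k<K. \<Omega> k)"
  proof
    fix u :: "real^'n"
    obtain v where "u = (\<Sum>k<K. v k)" and "\<forall>k<K. v k \<in> \<Omega> k"
      using sum_all by blast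
    then show "u \<in> span (\<Union>k<K. \<Omega> k)"
      by (auto intro: span_sum span_base)
  qed
  ultimately show "has_dss (concat (map W [0..<K])) UNIV x"
    by (rule has_dss_mono)
qed

end
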